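(* Let $F$ be a $4$-regular graph, let $D$ be a directed version of $F$, let $\mathbf o$ be a transitional orientation of $F$, let $\Gamma$ be a set of closed walks of $F$, and let $P$ be a circuit partition of $F$. Then $\mathrm{CM}(\mathrm{Tch}(P),\pi_P(\Gamma),\mathrm{Tch}_{\mathbf o}(P))$ is equal to $\mathrm{CM}(F,\Gamma,D)\cdot\Delta_{D,\mathbf o}|_{\tau(P)}$, after relabeling each row index $\pi_P(W)$ of the former matrix by $W$.
   Context: Graphs: $G=(V,H,E,\epsilon)$ with finite sets of vertices $V$ and half-edges $H$, a partition $E$ of $H$ into unordered pairs (edges), and $\epsilon:H\to V$; loops and multiple edges allowed. A directed version orders each edge as (tail, head). A single transition is an unordered pair of distinct half-edges incident with a common vertex; a directed single transition is such an ordered pair. A closed walk is a sequence $((h_1,h_2),\dots,(h_{n-1},h_n))$ of directed single transitions with $\{h_2,h_3\},\{h_4,h_5\},\dots,\{h_n,h_1\}$ edges, up to cyclic shift. For a directed version $D$ and closed walk $W$, $\sigma(D,W)\in\mathbb Z^{E}$ counts, at each edge $e$, traversals of $e$ along its direction minus traversals against it. A circuit is a nonempty closed walk using each half-edge at most once, with orientation forgotten. For a (multi)set $\Gamma$ of closed walks of $G$ and a directed version $D$, the cycle matrix $\mathrm{CM}(G,\Gamma,D)$ is the $\Gamma\times E(G)$ integer matrix whose row indexed by $W$ is $\sigma(D,W)$. $F$ is $4$-regular if every vertex is incident with exactly $4$ half-edges. A transition at $v$ is a partition of the four half-edges at $v$ into two single transitions; $\mathfrak T(F)$ is the set of transitions.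 A circuit partition $P$ is a set of circuits of $F$ such that every half-edge lies in exactly one single transition of exactly one circuit of $P$; $\tau(P)$ is the set of transitions both of whose single transitions occur in circuits of $P$. The touch-graph $\mathrm{Tch}(P)$ has vertex set $P$, half-edge set the set of single transitions occurring in circuits of $P$, edge set $\tau(P)$, and maps each single transition to the circuit containing it. A transitional orientation $\mathbf o$ assigns to each $t\in\mathfrak T(F)$ one of its two single transitions $\mathbf o(t)$; $\mathrm{Tch}_{\mathbf o}(P)$ is the directed version of $\mathrm{Tch}(P)$ in which each edge $t$ has head $\mathbf o(t)$ and tail the other single transition of $t$. For a closed walk $W$ of $F$, $\pi_P(W)$ is obtained by replacing each directed single transition $(h,h')$ of $W$ by $(s,s')$, where $s,s'$ are the single transitions of circuits of $P$ containing $h,h'$, and deleting pairs with $s=s'$; it is a closed walk of $\mathrm{Tch}(P)$ in which each remaining $(s,s')$ traverses edge $\{s,s'\}$ from half-edge $s$ to half-edge $s'$. $\pi_P(\Gamma)$ is the multiset $\{\pi_P(W):W\in\Gamma\}$. The edge-transition incidence matrix $\Delta_{D,\mathbf o}$ is the $E(F)\times\mathfrak T(F)$ matrix over $\mathbb Q$ whose $(e,t)$ entry is $1$ if $e\cap\mathbf o(t)=\{h\}$ with $h$ the tail of $e$ in $D$, $-1$ if $e\cap\mathbf o(t)=\{h\}$ with $h$ the head of $e$ in $D$, and $0$ otherwise; $A|_Y$ denotes the restriction to the columns in $Y$. *)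

theory Defs
  imports Main "HOL.Rat"
begin

record ('v, 'h) hgraph =
  verts :: "'v set"
  halfs :: "'h set"
  edges :: "'h set set"
  inc   :: "'h \<Rightarrow> 'v"

definition graph_wf :: "('v, 'h) hgraph \<Rightarrow> bool" where
  "graph_wf G \<longleftrightarrow> finite (verts G) \<and> finite (halfs G)
     \<and> (\<forall>e\<in>edges G. card e = 2 \<and> e \<subseteq> halfs G)
     \<and> (\<forall>h\<in>halfs G. \<exists>!e. e \<in> edges G \<and> h \<in> e)
     \<and> (\<forall>h\<in>halfs G. inc G h \<in> verts G)"

text \<open>A directed version is given by choosing the tail of every edge.\<close>
definition directed_version :: "('v, 'h) hgraph \<Rightarrow> ('h set \<Rightarrow> 'h) \<Rightarrow> bool" where
  "directed_version G tlf \<longleftrightarrow> (\<forall>e\<in>edges G. tlf e \<in> e)"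

definition head_of :: "('h set \<Rightarrow> 'h) \<Rightarrow> 'h set \<Rightarrow> 'h" where
  "head_of tlf e = (THE h. h \<in> e \<and> h \<noteq> tlf e)"

definition four_regular :: "('v, 'h) hgraph \<Rightarrow> bool" where
  "four_regular G \<longleftrightarrow> (\<forall>v\<in>verts G. card {h\<in>halfs G. inc G h = v} = 4)"

definition single_trans :: "('v, 'h) hgraph \<Rightarrow> 'h set \<Rightarrow> bool" where
  "single_trans G s \<longleftrightarrow> (\<exists>h h'. s = {h, h'} \<and> h \<noteq> h' \<and> h \<in> halfs G \<and> h' \<in> halfs G
      \<and> inc G h = inc G h')"

definition dir_single_trans :: "('v, 'h) hgraph \<Rightarrow> 'h \<times> 'h \<Rightarrow> bool" where
  "dir_single_trans G p \<longleftrightarrow> (case p of (h, h') \<Rightarrow>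
      h \<noteq> h' \<and> h \<in> halfs G \<and> h' \<in> halfs G \<and> inc G h = inc G h')"

text \<open>A closed walk ((h1,h2),...,(h(n-1),hn)) is a list of directed single transitions,
  where the second half-edge of each pair together with the first half-edge of the
  (cyclically) next pair forms an edge. Cyclic shifts are different lists, but everything
  below is invariant under them.\<close>
definition closed_walk :: "('v, 'h) hgraph \<Rightarrow> ('h \<times> 'h) list \<Rightarrow> bool" where
  "closed_walk G W \<longleftrightarrow> (\<forall>p\<in>set W. dir_single_trans G p)
     \<and> (\<forall>i<length W. {snd (W ! i), fst (W ! (Suc i mod length W))} \<in> edges G)"

definition traversals :: "('h \<times> 'h) list \<Rightarrow> ('h \<times> 'h) list" where
  "traversals W = map (\<lambda>i. (snd (W ! i), fst (W ! (Suc i mod length W)))) [0..<length W]"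

definition sigma_trav :: "('h set \<Rightarrow> 'h) \<Rightarrow> ('h \<times> 'h) list \<Rightarrow> 'h set \<Rightarrow> int" where
  "sigma_trav tlf T e =
     int (length (filter (\<lambda>(x, y). {x, y} = e \<and> x = tlf e) T))
   - int (length (filter (\<lambda>(x, y). {x, y} = e \<and> y = tlf e) T))"

definition cw_sigma :: "('h set \<Rightarrow> 'h) \<Rightarrow> ('h \<times> 'h) list \<Rightarrow> 'h set \<Rightarrow> int" where
  "cw_sigma tlf W e = sigma_trav tlf (traversals W) e"

definition cycle_matrix :: "('v, 'h) hgraph \<Rightarrow> ('h \<times> 'h) list set \<Rightarrow> ('h set \<Rightarrow> 'h)
    \<Rightarrow> ('h \<times> 'h) list \<Rightarrow> 'h set \<Rightarrow> int" where
  "cycle_matrix G Gam tlf W e = (if W \<in> Gam \<and> e \<in> edges G then cw_sigma tlf W e else 0)"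

definition reverse_walk :: "('h \<times> 'h) list \<Rightarrow> ('h \<times> 'h) list" where
  "reverse_walk W = rev (map (\<lambda>(a, b). (b, a)) W)"

text \<open>A circuit is represented as the class of all its representing closed walks
  (all cyclic shifts of both orientations).\<close>
definition circuit :: "('v, 'h) hgraph \<Rightarrow> ('h \<times> 'h) list set \<Rightarrow> bool" where
  "circuit G C \<longleftrightarrow> (\<exists>W. closed_walk G W \<and> W \<noteq> []
      \<and> distinct (concat (map (\<lambda>(a, b). [a, b]) W))
      \<and> C = {W'. \<exists>k. W' = rotate k W \<or> W' = rotate k (reverse_walk W)})"

definition circ_sts :: "('h \<times> 'h) list set \<Rightarrow> 'h set set" where
  "circ_sts C = (\<lambda>(a, b). {a, b}) ` (\<Union>W\<in>C. set W)"

definition circuit_partition :: "('v, 'h) hgraph \<Rightarrow> ('h \<times> 'h) list set set \<Rightarrow> bool" where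
  "circuit_partition G P \<longleftrightarrow> (\<forall>C\<in>P. circuit G C)
     \<and> (\<forall>h\<in>halfs G. \<exists>!(C, s). C \<in> P \<and> s \<in> circ_sts C \<and> h \<in> s)"

definition ftrans :: "('v, 'h) hgraph \<Rightarrow> 'h set set set" where
  "ftrans G = {{s1, s2} | s1 s2 v. v \<in> verts G \<and> single_trans G s1 \<and> single_trans G s2
      \<and> s1 \<inter> s2 = {} \<and> s1 \<union> s2 = {h\<in>halfs G. inc G h = v}}"

definition tau :: "('v, 'h) hgraph \<Rightarrow> ('h \<times> 'h) list set set \<Rightarrow> 'h set set set" where
  "tau G P = {t\<in>ftrans G. \<forall>s\<in>t. \<exists>C\<in>P. s \<in> circ_sts C}"

definition trans_orientation :: "('v, 'h) hgraph \<Rightarrow> ('h set set \<Rightarrow> 'h set) \<Rightarrow> bool" where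
  "trans_orientation G ori \<longleftrightarrow> (\<forall>t\<in>ftrans G. ori t \<in> t)"

definition tch :: "('h \<times> 'h) list set set \<Rightarrow> 'h set set set
    \<Rightarrow> (('h \<times> 'h) list set, 'h set) hgraph" where
  "tch P T = \<lparr> verts = P, halfs = (\<Union>C\<in>P. circ_sts C), edges = T,
              inc = (\<lambda>s. THE C. C \<in> P \<and> s \<in> circ_sts C) \<rparr>"

definition touch_graph :: "('v, 'h) hgraph \<Rightarrow> ('h \<times> 'h) list set set
    \<Rightarrow> (('h \<times> 'h) list set, 'h set) hgraph" where
  "touch_graph G P = tch P (tau G P)"

text \<open>Directed version Tch_o(P): head of t is ori t, tail is the other single transition.\<close>
definition tch_tail :: "('h set set \<Rightarrow> 'h set) \<Rightarrow> 'h set set \<Rightarrow> 'h set" where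
  "tch_tail ori t = (THE s. s \<in> t \<and> s \<noteq> ori t)"

definition st_of :: "('h \<times> 'h) list set set \<Rightarrow> 'h \<Rightarrow> 'h set" where
  "st_of P h = (THE s. \<exists>C\<in>P. s \<in> circ_sts C \<and> h \<in> s)"

text \<open>The literal list of pairs (s,s') from the paper; each pair traverses edge {s,s'}.\<close>
definition pi_pairs :: "('h \<times> 'h) list set set \<Rightarrow> ('h \<times> 'h) list \<Rightarrow> ('h set \<times> 'h set) list" where
  "pi_pairs P W = filter (\<lambda>(s, s'). s \<noteq> s') (map (\<lambda>(h, h'). (st_of P h, st_of P h')) W)"

text \<open>Turn a cyclic list of edge traversals (a_i,b_i) into the closed-walk format
  ((b_k,a_1),(b_1,a_2),...,(b_(k-1),a_k)), whose traversals are exactly the (a_i,b_i).\<close>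
definition walk_of_trav :: "('a \<times> 'a) list \<Rightarrow> ('a \<times> 'a) list" where
  "walk_of_trav T = map (\<lambda>i. (snd (T ! ((i + length T - 1) mod length T)), fst (T ! i)))
                        [0..<length T]"

definition pi_walk :: "('h \<times> 'h) list set set \<Rightarrow> ('h \<times> 'h) list \<Rightarrow> ('h set \<times> 'h set) list" where
  "pi_walk P W = walk_of_trav (pi_pairs P W)"

definition Delta :: "('v, 'h) hgraph \<Rightarrow> ('h set \<Rightarrow> 'h) \<Rightarrow> ('h set set \<Rightarrow> 'h set)
    \<Rightarrow> 'h set \<Rightarrow> 'h set set \<Rightarrow> rat" where
  "Delta G tlf ori e t =
    (if e \<in> edges G \<and> t \<in> ftrans G \<and> (\<exists>h. e \<inter> ori t = {h}) then
       (let h = (THE h. e \<inter> ori t = {h}) in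
         if h = tlf e then 1 else if h = head_of tlf e then -1 else 0)
     else 0)"

end

theory Submission
  imports Defs
begin

(* Fix t in tau(P) with head O = o(t) and tail T. Both entries equal the net number of
   transitions (h, h') of W entering O, i.e. the sum over W of [h' in O] - [h in O].
   In the touch-graph, the classes of P containing the half-edges at the vertex of t are
   exactly O and T, so (h, h') projects to a traversal of t precisely when it passes between
   O and T, against the direction of t when it leaves O.  In F, the signed traversal of
   e = {x, y} from x to y times Delta(e, t) is [x in O] - [y in O]; summed along the closed
   walk this telescopes to the same count, because each transition starts where the previous
   traversal ends. *)

definition flux :: "'h set \<Rightarrow> ('h \<times> 'h) list \<Rightarrow> 'a::ring_1" where
  "flux S ps = (\<Sum>(a, b)\<leftarrow>ps. of_bool (b \<in> S) - of_bool (a \<in> S))"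

lemma flux_zip:
  "length as = length bs \<Longrightarrow>
     flux S (zip as bs) = (\<Sum>b\<leftarrow>bs. of_bool (b \<in> S)) - (\<Sum>a\<leftarrow>as. of_bool (a \<in> S))"
  unfolding flux_def by (induction as bs rule: list_induct2) simp_all

lemma sum_list_rotate1: "sum_list (rotate1 xs) = (sum_list xs :: 'a::comm_monoid_add)"
  by (cases xs) (simp_all add: add.commute)

lemma traversals_eq_zip: "traversals W = zip (map snd W) (rotate1 (map fst W))"
proof (rule nth_equalityI)
  fix i assume "i < length (traversals W)"
  then have i: "i < length W" by (simp add: traversals_def)
  then have "Suc i mod length W < length W" by (intro mod_less_divisor) auto
  with i show "traversals W ! i = zip (map snd W) (rotate1 (map fst W)) ! i"
    by (simp add: traversals_def nth_rotate1)
qed (simp add: traversals_def)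

lemma flux_traversals: "flux S (traversals W) = - flux S W"
proof -
  have "flux S (traversals W)
      = (\<Sum>a\<leftarrow>map fst W. of_bool (a \<in> S)) - (\<Sum>b\<leftarrow>map snd W. of_bool (b \<in> S))"
    by (simp add: traversals_eq_zip flux_zip rotate1_map[symmetric] sum_list_rotate1)
  also have "\<dots> = - flux S (zip (map fst W) (map snd W))"
    by (simp add: flux_zip)
  finally show ?thesis by (simp add: zip_map_fst_snd)
qed

lemma traversals_walk_of_trav: "traversals (walk_of_trav T) = T"
proof (rule nth_equalityI)
  show "length (traversals (walk_of_trav T)) = length T"
    by (simp add: traversals_def walk_of_trav_def)
next
  fix i assume "i < length (traversals (walk_of_trav T))"
  then have i: "i < length T" by (simp add: traversals_def walk_of_trav_def)
  then have "Suc i mod length T < length T" by (intro mod_less_divisor) auto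
  have "(Suc i mod length T + length T - 1) mod length T = i"
  proof (cases "Suc i = length T")
    case True
    then show ?thesis by simp
  qed (use i in simp)
  then show "traversals (walk_of_trav T) ! i = T ! i"
    using i \<open>Suc i mod length T < length T\<close> by (simp add: traversals_def walk_of_trav_def)
qed

lemma of_int_sigma_trav:
  "of_int (sigma_trav tlf T e) =
     (\<Sum>(x, y)\<leftarrow>T. of_bool ({x, y} = e \<and> x = tlf e) - of_bool ({x, y} = e \<and> y = tlf e) :: 'a::ring_1)"
  unfolding sigma_trav_def by (induction T) (auto split: prod.splits simp: algebra_simps)

lemma sum_sum_list_swap:
  "(\<Sum>e\<in>E. \<Sum>x\<leftarrow>xs. f e x) = (\<Sum>x\<leftarrow>xs. \<Sum>e\<in>E. f e x :: 'a::comm_monoid_add)"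
  by (induction xs) (simp_all add: sum.distrib)

lemma graph_wf_finite_edges: "graph_wf G \<Longrightarrow> finite (edges G)"
  unfolding graph_wf_def by (meson Pow_iff finite_Pow_iff finite_subset subsetI)

lemma head_of_doubleton:
  assumes "x \<noteq> y" "tlf {x, y} \<in> {x, y}"
  shows "head_of tlf {x, y} = (if tlf {x, y} = x then y else x)"
  unfolding head_of_def using assms by (auto intro!: the_equality)

lemma Delta_traversal:
  assumes "{x, y} \<in> edges G" "x \<noteq> y" "tlf {x, y} \<in> {x, y}" "t \<in> ftrans G"
  shows "(of_bool (x = tlf {x, y}) - of_bool (y = tlf {x, y})) * Delta G tlf ori {x, y} t
           = of_bool (x \<in> ori t) - of_bool (y \<in> ori t)"
proof (cases "\<exists>h. {x, y} \<inter> ori t = {h}")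
  case True
  then obtain h where h: "{x, y} \<inter> ori t = {h}" by blast
  then have "(THE h. {x, y} \<inter> ori t = {h}) = h" by simp
  with True assms(1,4) have "Delta G tlf ori {x, y} t
      = (if h = tlf {x, y} then 1 else if h = head_of tlf {x, y} then -1 else 0)"
    by (simp add: Delta_def)
  moreover have "x \<in> ori t \<longleftrightarrow> h = x" "y \<in> ori t \<longleftrightarrow> h = y"
    using h by (metis Int_iff insert_iff singleton_iff)+
  ultimately show ?thesis
    using assms(2,3) by (auto simp: head_of_doubleton)
next
  case False
  then have "Delta G tlf ori {x, y} t = 0" by (simp add: Delta_def)
  moreover have "x \<in> ori t \<longleftrightarrow> y \<in> ori t" using False by blast
  ultimately show ?thesis by simp
qed

lemma sum_cw_sigma_Delta:
  assumes "graph_wf G" "directed_version G tlf" "closed_walk G W" "t \<in> ftrans G"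
  shows "(\<Sum>e\<in>edges G. of_int (cw_sigma tlf W e) * Delta G tlf ori e t) = flux (ori t) W"
proof -
  let ?sign = "\<lambda>e (x, y). of_bool ({x, y} = e \<and> x = tlf e) - of_bool ({x, y} = e \<and> y = tlf e)"
  have "(\<Sum>e\<in>edges G. of_int (cw_sigma tlf W e) * Delta G tlf ori e t)
      = (\<Sum>p\<leftarrow>traversals W. \<Sum>e\<in>edges G. ?sign e p * Delta G tlf ori e t)"
    by (simp add: cw_sigma_def of_int_sigma_trav sum_sum_list_swap case_prod_unfold
        flip: sum_list_mult_const)
  also have "\<dots> = (\<Sum>(x, y)\<leftarrow>traversals W. of_bool (x \<in> ori t) - of_bool (y \<in> ori t))"
  proof (rule arg_cong[where f = sum_list], rule map_cong[OF refl])
    fix p assume "p \<in> set (traversals W)"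
    then obtain x y where p: "p = (x, y)" and e: "{x, y} \<in> edges G"
      using assms(3) unfolding traversals_def closed_walk_def by auto
    have "x \<noteq> y" using e assms(1) unfolding graph_wf_def by fastforce
    moreover have "tlf {x, y} \<in> {x, y}" using e assms(2) unfolding directed_version_def by blast
    moreover have "(\<Sum>e\<in>edges G. ?sign e (x, y) * Delta G tlf ori e t)
        = (\<Sum>e\<in>edges G.
             if e = {x, y} then ?sign {x, y} (x, y) * Delta G tlf ori {x, y} t else 0)"
      by (rule sum.cong) auto
    ultimately show "(\<Sum>e\<in>edges G. ?sign e p * Delta G tlf ori e t)
        = (\<lambda>(x, y). of_bool (x \<in> ori t) - of_bool (y \<in> ori t)) p"
      using Delta_traversal[OF e _ _ assms(4)] graph_wf_finite_edges[OF assms(1)] e p by simp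
  qed
  also have "\<dots> = - flux (ori t) (traversals W)"
    by (simp add: flux_def sum_list_subtractf uminus_sum_list_map case_prod_unfold)
  finally show ?thesis by (simp add: flux_traversals)
qed

lemma circuit_partition_st_of_eq:
  assumes "circuit_partition G P" "h \<in> halfs G" "C \<in> P" "s \<in> circ_sts C" "h \<in> s"
  shows "st_of P h = s"
  unfolding st_of_def
proof (rule the_equality)
  show "\<exists>C\<in>P. s \<in> circ_sts C \<and> h \<in> s" using assms(3-5) by blast
next
  fix s' assume "\<exists>C'\<in>P. s' \<in> circ_sts C' \<and> h \<in> s'"
  then obtain C' where "C' \<in> P" "s' \<in> circ_sts C'" "h \<in> s'" by blast
  with assms have "(C', s') = (C, s)"
    unfolding circuit_partition_def by (metis (mono_tags, lifting) case_prod_conv)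
  then show "s' = s" by simp
qed

lemma circuit_partition_mem_st_of:
  assumes "circuit_partition G P" "h \<in> halfs G"
  shows "h \<in> st_of P h"
proof -
  obtain C s where "C \<in> P" "s \<in> circ_sts C" "h \<in> s"
    using assms unfolding circuit_partition_def by blast
  with circuit_partition_st_of_eq[OF assms] show ?thesis by simp
qed

lemma circuit_partition_st_of_eq_iff:
  assumes "circuit_partition G P" "h \<in> halfs G" "C \<in> P" "s \<in> circ_sts C"
  shows "st_of P h = s \<longleftrightarrow> h \<in> s"
  using circuit_partition_st_of_eq[OF assms] circuit_partition_mem_st_of[OF assms(1,2)] by blast

lemma st_of_mem_tau:
  assumes "circuit_partition G P" "t \<in> tau G P" "s \<in> t" "h \<in> s"
    and "h' \<in> halfs G" "inc G h' = inc G h"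
  shows "st_of P h' \<in> t"
proof -
  obtain s1 s2 v where t: "t = {s1, s2}" and at_v: "s1 \<union> s2 = {k \<in> halfs G. inc G k = v}"
    using assms(2) unfolding tau_def ftrans_def by blast
  have "h' \<in> s1 \<union> s2" using assms(3-6) t at_v by auto
  then obtain s' where "s' \<in> t" "h' \<in> s'" using t by blast
  moreover obtain C where "C \<in> P" "s' \<in> circ_sts C"
    using assms(2) \<open>s' \<in> t\<close> unfolding tau_def by blast
  ultimately show ?thesis using circuit_partition_st_of_eq[OF assms(1,5)] by metis
qed

lemma tch_tail_ftrans:
  assumes "trans_orientation G ori" "t \<in> ftrans G"
  shows "tch_tail ori t \<noteq> ori t" "{tch_tail ori t, ori t} = t"
proof -
  obtain s1 s2 where t: "t = {s1, s2}" and "single_trans G s1" "s1 \<inter> s2 = {}"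
    using assms(2) unfolding ftrans_def by blast
  then have "s1 \<noteq> s2" unfolding single_trans_def by blast
  define ot where "ot = ori t"
  have "ot \<in> t" using assms unfolding trans_orientation_def ot_def by blast
  with t obtain s where s: "t = {s, ot}" "s \<noteq> ot"
    using \<open>s1 \<noteq> s2\<close> by blast
  then have "tch_tail ori t = s"
    unfolding tch_tail_def ot_def[symmetric] by (intro the_equality) blast+
  with s show "tch_tail ori t \<noteq> ori t" "{tch_tail ori t, ori t} = t"
    unfolding ot_def by simp_all
qed

lemma sigma_summand_st_of:
  assumes "circuit_partition G P" "trans_orientation G ori" "t \<in> tau G P"
    and "dir_single_trans G (h, h')"
  shows "of_bool ({st_of P h, st_of P h'} = t \<and> st_of P h = tch_tail ori t)
           - of_bool ({st_of P h, st_of P h'} = t \<and> st_of P h' = tch_tail ori t)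
         = of_bool (h' \<in> ori t) - (of_bool (h \<in> ori t) :: 'a::ring_1)"
proof -
  define head_st tail_st where "head_st = ori t" and "tail_st = tch_tail ori t"
  have "t \<in> ftrans G" using assms(3) unfolding tau_def by blast
  then have t: "t = {tail_st, head_st}" "tail_st \<noteq> head_st"
    using tch_tail_ftrans[OF assms(2)] unfolding head_st_def tail_st_def by metis+
  obtain C where "C \<in> P" "head_st \<in> circ_sts C"
    using assms(3) t unfolding tau_def by blast
  have h: "h \<in> halfs G" "h' \<in> halfs G" "inc G h' = inc G h"
    using assms(4) unfolding dir_single_trans_def by auto
  have st_hd: "st_of P k = head_st \<longleftrightarrow> k \<in> head_st" if "k \<in> halfs G" for k
    using circuit_partition_st_of_eq_iff[OF assms(1) that \<open>C \<in> P\<close> \<open>head_st \<in> circ_sts C\<close>] .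
  show ?thesis
  proof (cases "h \<in> head_st \<or> h' \<in> head_st")
    case True
    then have "st_of P h \<in> t" "st_of P h' \<in> t"
      using st_of_mem_tau[OF assms(1,3), of head_st] h t by (metis insertCI)+
    then have "st_of P h = (if h \<in> head_st then head_st else tail_st)"
      "st_of P h' = (if h' \<in> head_st then head_st else tail_st)"
      using st_hd h t by auto
    then show ?thesis using t unfolding head_st_def[symmetric] tail_st_def[symmetric] by auto
  next
    case False
    then have "st_of P h \<noteq> head_st" "st_of P h' \<noteq> head_st" using st_hd h by auto
    then have "{st_of P h, st_of P h'} \<noteq> t" using t by auto
    with False show ?thesis unfolding head_st_def[symmetric] tail_st_def[symmetric] by simp
  qed
qed

lemma of_int_sigma_trav_pi_pairs:
  assumes "circuit_partition G P" "trans_orientation G ori" "t \<in> tau G P" "closed_walk G W"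
  shows "of_int (sigma_trav (tch_tail ori) (pi_pairs P W) t) = (flux (ori t) W :: 'a::ring_1)"
proof -
  have "of_int (sigma_trav (tch_tail ori) (pi_pairs P W) t)
      = (\<Sum>(s, s')\<leftarrow>map (\<lambda>(h, h'). (st_of P h, st_of P h')) W.
           of_bool ({s, s'} = t \<and> s = tch_tail ori t)
           - (of_bool ({s, s'} = t \<and> s' = tch_tail ori t) :: 'a))"
    unfolding of_int_sigma_trav pi_pairs_def by (rule sum_list_map_filter) auto
  also have "\<dots> = flux (ori t) W"
    unfolding flux_def map_map
  proof (rule arg_cong[where f = sum_list], rule map_cong[OF refl])
    fix p assume "p \<in> set W"
    moreover obtain h h' where p: "p = (h, h')" by (cases p)
    ultimately have "dir_single_trans G (h, h')" using assms(4) unfolding closed_walk_def by blast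
    then show "((\<lambda>(s, s'). of_bool ({s, s'} = t \<and> s = tch_tail ori t)
                 - of_bool ({s, s'} = t \<and> s' = tch_tail ori t)) \<circ> (\<lambda>(h, h'). (st_of P h, st_of P h'))) p
             = (\<lambda>(a, b). of_bool (b \<in> ori t) - (of_bool (a \<in> ori t) :: 'a)) p"
      unfolding p comp_def prod.case by (rule sigma_summand_st_of[OF assms(1-3)])
  qed
  finally show ?thesis .
qed

lemma cycle_matrix_touch_graph:
  assumes "W \<in> Gam" "t \<in> tau G P"
  shows "cycle_matrix (touch_graph G P) (pi_walk P ` Gam) (tch_tail ori) (pi_walk P W) t
           = sigma_trav (tch_tail ori) (pi_pairs P W) t"
  using assms
  by (simp add: cycle_matrix_def touch_graph_def tch_def cw_sigma_def pi_walk_def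
      traversals_walk_of_trav)

theorem mainTheorem8:
  fixes F :: "('v, 'h) hgraph"
    and tlf :: "'h set \<Rightarrow> 'h"
    and ori :: "'h set set \<Rightarrow> 'h set"
    and Gam :: "('h \<times> 'h) list set"
    and P :: "('h \<times> 'h) list set set"
  assumes "graph_wf F"
    and "four_regular F"
    and "directed_version F tlf"
    and "trans_orientation F ori"
    and "\<forall>W\<in>Gam. closed_walk F W"
    and "circuit_partition F P"
  shows "\<forall>W\<in>Gam. \<forall>t\<in>tau F P.
           of_int (cycle_matrix (touch_graph F P) (pi_walk P ` Gam) (tch_tail ori) (pi_walk P W) t)
           = (\<Sum>e\<in>edges F. of_int (cycle_matrix F Gam tlf W e) * Delta F tlf ori e t)"
proof (intro ballI)
  fix W t assume W: "W \<in> Gam" and t: "t \<in> tau F P"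
  have walk: "closed_walk F W" using W assms(5) by blast
  have "t \<in> ftrans F" using t unfolding tau_def by blast
  have "of_int (cycle_matrix (touch_graph F P) (pi_walk P ` Gam) (tch_tail ori) (pi_walk P W) t)
      = (flux (ori t) W :: rat)"
    unfolding cycle_matrix_touch_graph[OF W t]
    by (rule of_int_sigma_trav_pi_pairs[OF assms(6,4) t walk])
  also have "\<dots> = (\<Sum>e\<in>edges F. of_int (cw_sigma tlf W e) * Delta F tlf ori e t)"
    by (rule sum_cw_sigma_Delta[OF assms(1,3) walk \<open>t \<in> ftrans F\<close>, symmetric])
  also have "\<dots> = (\<Sum>e\<in>edges F. of_int (cycle_matrix F Gam tlf W e) * Delta F tlf ori e t)"
    using W by (intro sum.cong) (simp_all add: cycle_matrix_def)
  finally show "of_int (cycle_matrix (touch_graph F P) (pi_walk P ` Gam) (tch_tail ori) (pi_walk P W) t)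
      = (\<Sum>e\<in>edges F. of_int (cycle_matrix F Gam tlf W e) * Delta F tlf ori e t)" .
qed

end
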